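(* Let $r,K,q\in\mathbb{Z}_{++}$, $A\in\mathbb{R}^{r\times r}$ and $V\in\mathbb{R}^{q\times r}$. Let $U,\tilde U\in\mathbb{R}^{r\times K}$ be matrices each of whose columns has Euclidean norm at most $1$. Define $F(U)=\mathrm{Clip}\big(VU\,\mathrm{Softmax}(U^\top AU/\sqrt r)\big)$. Then $$\|F(U)-F(\tilde U)\|_F^2\le 2K\|V\|_\sigma^2\Big(1+\frac{4K\|A\|_\sigma^2}{r}\Big)\|U-\tilde U\|_F^2 .$$
   Context: $\mathrm{Softmax}$ is applied to each column of the $K\times K$ matrix separately. $\mathrm{Clip}$ maps each column $c$ of its matrix argument to $c/\max\{1,\|c\|_2\}$. $\|\cdot\|_\sigma$ is the operator (spectral) norm and $\|\cdot\|_F$ the Frobenius norm. *)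

theory Defs
  imports "HOL-Analysis.Analysis"
begin

text \<open>Matrices are type-indexed: a matrix in R^(m x n) is real^'n^'m (rows 'm, columns 'n).\<close>

definition fro_norm :: "real^'n^'m \<Rightarrow> real" where
  "fro_norm M = sqrt (\<Sum>i\<in>UNIV. \<Sum>j\<in>UNIV. (M $ i $ j)^2)"

definition op_norm :: "real^'n^'m \<Rightarrow> real" where
  "op_norm M = onorm (\<lambda>x. M *v x)"

definition softmax_cols :: "real^'k^'k \<Rightarrow> real^'k^'k" where
  "softmax_cols B = (\<chi> i j. exp (B $ i $ j) / (\<Sum>l\<in>UNIV. exp (B $ l $ j)))"

definition clip_cols :: "real^'k^'m \<Rightarrow> real^'k^'m" where
  "clip_cols M = (\<chi> i j. M $ i $ j / max 1 (norm (column j M)))"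

definition attn_F :: "real^'r^'r \<Rightarrow> real^'r^'q \<Rightarrow> real^'k^'r \<Rightarrow> real^'k^'q" where
  "attn_F A V U = clip_cols ((V ** U) **
      softmax_cols ((1 / sqrt (real CARD('r))) *\<^sub>R (transpose U ** A ** U)))"

end

theory Submission
  imports Defs
begin

text \<open>
  Clip is the nearest-point projection onto the unit ball and the Jacobian of softmax at x is
  \<open>diag p - p p\<^sup>T\<close> with \<open>p = softmax x\<close>, which has norm at most 1; applied columnwise, both maps are
  therefore 1-Lipschitz for the Frobenius norm. With \<open>S, S'\<close> the two softmax matrices it remains to
  bound \<open>V (U S - U' S') = V ((U - U') S + U' (S - S'))\<close>. Matrices with columns in the unit ball
  have Frobenius norm at most \<open>\<surd>K\<close>, and \<open>S - S'\<close> is controlled by the bilinear expansion of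
  \<open>U\<^sup>T A U - U'\<^sup>T A U'\<close>, giving \<open>\<parallel>F U - F U'\<parallel> \<le> \<parallel>V\<parallel>\<^sub>\<sigma> (\<surd>K + 2 K \<parallel>A\<parallel>\<^sub>\<sigma> / \<surd>r) \<parallel>U - U'\<parallel>\<close>;
  squaring with \<open>(a + b)\<^sup>2 \<le> 2 a\<^sup>2 + 2 b\<^sup>2\<close> yields the claim.
\<close>

lemma fro_norm_eq_norm: "fro_norm M = norm M"
  unfolding fro_norm_def norm_vec_def L2_set_def
  by (simp add: sum_nonneg)

lemma norm_vec_power2: "(norm x)\<^sup>2 = (\<Sum>i\<in>UNIV. (norm (x$i))\<^sup>2)"
  unfolding norm_vec_def L2_set_def by (simp add: sum_nonneg)

lemma norm_matrix_power2: "(norm (M::real^'n^'m))\<^sup>2 = (\<Sum>i\<in>UNIV. \<Sum>j\<in>UNIV. (M $ i $ j)\<^sup>2)"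
  by (simp add: norm_vec_power2)

lemma norm_matrix_power2_columns:
  "(norm (M::real^'k^'m))\<^sup>2 = (\<Sum>j\<in>UNIV. (norm (column j M))\<^sup>2)"
  unfolding norm_matrix_power2 column_def by (simp add: norm_vec_power2) (rule sum.swap)

lemma norm_matrix_le_if_columns_le:
  assumes "\<And>j. norm (column j (X::real^'k^'m)) \<le> norm (column j (Y::real^'k^'n))"
  shows "norm X \<le> norm Y"
proof -
  have "(norm X)\<^sup>2 \<le> (norm Y)\<^sup>2"
    unfolding norm_matrix_power2_columns by (intro sum_mono power_mono assms) simp
  then show ?thesis by simp
qed

lemma norm_matrix_le_sqrt_card:
  assumes "\<And>j. norm (column j (M::real^'k^'m)) \<le> 1"
  shows "norm M \<le> sqrt (real CARD('k))"
proof -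
  have "(norm M)\<^sup>2 \<le> (\<Sum>j\<in>(UNIV::'k set). 1)"
    unfolding norm_matrix_power2_columns by (intro sum_mono) (simp add: assms power_le_one)
  then show ?thesis by (simp add: real_le_rsqrt)
qed

lemma column_diff: "column j (X - Y) = column j X - column j Y"
  by (simp add: column_def vec_eq_iff)

lemma column_matrix_mult: "column j (M ** N) = M *v column j N"
  by (simp add: column_def matrix_matrix_mult_def matrix_vector_mult_def vec_eq_iff)

lemma matrix_mult_diff_ldistrib: "(A::real^'n^'m) ** (B - C) = A ** B - A ** (C::real^'k^'n)"
  by (simp add: matrix_matrix_mult_def vec_eq_iff sum_subtractf algebra_simps)

lemma matrix_mult_diff_rdistrib: "((A::real^'n^'m) - B) ** (C::real^'k^'n) = A ** C - B ** C"
  by (simp add: matrix_matrix_mult_def vec_eq_iff sum_subtractf algebra_simps)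

lemma transpose_diff: "transpose ((A::real^'n^'m) - B) = transpose A - transpose B"
  by (simp add: transpose_def vec_eq_iff)

lemma norm_transpose: "norm (transpose (M::real^'n^'m)) = norm M"
proof -
  have "(norm (transpose M))\<^sup>2 = (norm M)\<^sup>2"
    unfolding norm_matrix_power2 transpose_def by simp (rule sum.swap)
  then show ?thesis by simp
qed

lemma norm_matrix_vector_mult_le: "norm ((M::real^'n^'m) *v x) \<le> norm M * norm x"
proof -
  have "(norm (M *v x))\<^sup>2 = (\<Sum>i\<in>UNIV. ((M$i) \<bullet> x)\<^sup>2)"
    by (simp add: norm_vec_power2 matrix_vector_mul_component)
  also have "\<dots> \<le> (\<Sum>i\<in>UNIV. (norm (M$i))\<^sup>2 * (norm x)\<^sup>2)"
    by (intro sum_mono) (metis Cauchy_Schwarz_ineq2 abs_ge_zero power2_abs power_mono power_mult_distrib)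
  also have "\<dots> = (norm M * norm x)\<^sup>2"
    by (simp add: power_mult_distrib sum_distrib_right[symmetric] norm_vec_power2[of M])
  finally show ?thesis by (rule power2_le_imp_le) simp
qed

lemma op_norm_nonneg: "0 \<le> op_norm M"
  unfolding op_norm_def by (rule onorm_pos_le) simp

lemma norm_matrix_vector_mult_le_op_norm: "norm (M *v x) \<le> op_norm M * norm x"
  unfolding op_norm_def by (rule onorm) simp

lemma op_norm_le_norm: "op_norm M \<le> norm M"
  unfolding op_norm_def by (rule onorm_le) (rule norm_matrix_vector_mult_le)

lemma norm_matrix_mult_le_op_norm:
  "norm ((M::real^'n^'m) ** (N::real^'k^'n)) \<le> op_norm M * norm N"
proof -
  have "(norm (M ** N))\<^sup>2 \<le> (op_norm M * norm N)\<^sup>2"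
    unfolding norm_matrix_power2_columns column_matrix_mult power_mult_distrib sum_distrib_left
    by (intro sum_mono)
       (metis norm_matrix_vector_mult_le_op_norm norm_ge_zero power_mono power_mult_distrib)
  then show ?thesis by (rule power2_le_imp_le) (simp add: op_norm_nonneg)
qed

lemma norm_matrix_mult_le: "norm ((M::real^'n^'m) ** (N::real^'k^'n)) \<le> norm M * norm N"
  by (meson mult_right_mono norm_ge_zero norm_matrix_mult_le_op_norm op_norm_le_norm order_trans)

definition clip_vec :: "real^'m \<Rightarrow> real^'m" where
  "clip_vec x = (1 / max 1 (norm x)) *\<^sub>R x"

lemma clip_vec_eq_closest_point: "clip_vec (x::real^'m) = closest_point (cball 0 1) x"
proof (rule closest_point_unique)
  show "clip_vec x \<in> cball 0 1"
    by (auto simp: clip_vec_def max_def norm_mult divide_simps)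
  show "\<forall>z\<in>cball 0 1. dist x (clip_vec x) \<le> dist x z"
  proof
    fix z :: "real^'m"
    assume z: "z \<in> cball 0 1"
    show "dist x (clip_vec x) \<le> dist x z"
    proof (cases "norm x \<le> 1")
      case True
      then show ?thesis by (simp add: clip_vec_def max_def)
    next
      case False
      then have "x - clip_vec x = (1 - 1 / norm x) *\<^sub>R x" "0 \<le> 1 - 1 / norm x" "x \<noteq> 0"
        by (auto simp: clip_vec_def max_def algebra_simps divide_le_eq_1)
      then have "dist x (clip_vec x) = (1 - 1 / norm x) * norm x"
        by (simp add: dist_norm)
      also have "\<dots> = norm x - 1"
        using \<open>x \<noteq> 0\<close> by (simp add: field_simps)
      also have "\<dots> \<le> norm x - norm z" using z by simp
      also have "\<dots> \<le> dist x z" by (simp add: dist_norm norm_triangle_ineq2)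
      finally show ?thesis .
    qed
  qed
qed auto

lemma clip_vec_lipschitz: "norm (clip_vec x - clip_vec y) \<le> norm (x - y)"
  using closest_point_lipschitz[of "cball 0 1" x y]
  by (simp add: clip_vec_eq_closest_point dist_norm)

lemma column_clip_cols: "column j (clip_cols M) = clip_vec (column j M)"
  by (simp add: column_def clip_cols_def clip_vec_def vec_eq_iff)

lemma norm_clip_cols_diff_le: "norm (clip_cols X - clip_cols Y) \<le> norm (X - Y)"
  by (rule norm_matrix_le_if_columns_le) (simp add: column_diff column_clip_cols clip_vec_lipschitz)

lemma has_derivative_vec_nth: "((\<lambda>x. x $ i) has_derivative (\<lambda>h. h $ i)) F"
  by (rule bounded_linear_imp_has_derivative) (rule bounded_linear_vec_nth)

lemma has_derivative_vec_componentwise: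
  fixes f :: "'a::real_normed_vector \<Rightarrow> real^'k"
  assumes "\<And>i. ((\<lambda>x. f x $ i) has_derivative (\<lambda>h. f' h $ i)) (at a within S)"
  shows "(f has_derivative f') (at a within S)"
proof (subst has_derivative_componentwise_within, intro ballI)
  fix b :: "real^'k"
  assume "b \<in> Basis"
  then obtain i where "b = axis i 1" unfolding Basis_vec_def by auto
  then show "((\<lambda>x. f x \<bullet> b) has_derivative (\<lambda>x. f' x \<bullet> b)) (at a within S)"
    using assms[of i] by (simp add: inner_axis)
qed

definition softmax :: "real^'k \<Rightarrow> real^'k" where
  "softmax x = (\<chi> i. exp (x$i) / (\<Sum>l\<in>UNIV. exp (x$l)))"

definition softmax_deriv :: "real^'k \<Rightarrow> real^'k \<Rightarrow> real^'k" where
  "softmax_deriv x h = (\<chi> i. softmax x $ i * (h$i - (\<Sum>l\<in>UNIV. softmax x $ l * h$l)))"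

lemma sum_exp_pos: "0 < (\<Sum>l\<in>UNIV. exp ((x::real^'k)$l))"
  by (rule sum_pos) auto

lemma softmax_nonneg: "0 \<le> softmax x $ i"
  using sum_exp_pos[of x] by (simp add: softmax_def)

lemma sum_softmax: "(\<Sum>i\<in>UNIV. softmax x $ i) = 1"
  using sum_exp_pos[of x] by (simp add: softmax_def sum_divide_distrib[symmetric])

lemma softmax_le_1: "softmax x $ i \<le> 1"
  by (metis sum_softmax member_le_sum softmax_nonneg finite UNIV_I)

lemma has_derivative_softmax_component:
  "((\<lambda>x. softmax x $ i) has_derivative (\<lambda>h. softmax_deriv x h $ i)) (at x within S)"
proof -
  define s where "s = (\<Sum>l\<in>UNIV. exp (x$l))"
  have s: "0 < s" unfolding s_def by (rule sum_exp_pos)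
  have exp: "((\<lambda>x. exp (x$l)) has_derivative (\<lambda>h. h$l * exp (x$l))) (at x within S)" for l
    by (rule has_derivative_exp[OF has_derivative_vec_nth])
  have sum: "((\<lambda>x. \<Sum>l\<in>UNIV. exp (x$l)) has_derivative (\<lambda>h. \<Sum>l\<in>UNIV. h$l * exp (x$l)))
      (at x within S)"
    by (rule has_derivative_sum) (rule exp)
  have "((\<lambda>x. exp (x$i) / (\<Sum>l\<in>UNIV. exp (x$l))) has_derivative
      (\<lambda>h. (h$i * exp (x$i) * s - exp (x$i) * (\<Sum>l\<in>UNIV. h$l * exp (x$l))) / (s * s)))
      (at x within S)"
    unfolding s_def by (rule has_derivative_divide'[OF exp sum]) (use s in \<open>simp add: s_def\<close>)
  moreover have "(h$i * exp (x$i) * s - exp (x$i) * (\<Sum>l\<in>UNIV. h$l * exp (x$l))) / (s * s)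
      = softmax_deriv x h $ i" for h
  proof -
    have "(\<Sum>l\<in>UNIV. exp (x$l) / s * h$l) = (\<Sum>l\<in>UNIV. h$l * exp (x$l)) / s"
      by (simp add: sum_divide_distrib mult.commute)
    with s show ?thesis
      by (simp add: softmax_deriv_def softmax_def s_def[symmetric] field_simps)
  qed
  ultimately show ?thesis
    by (simp add: softmax_def)
qed

lemma has_derivative_softmax: "(softmax has_derivative softmax_deriv x) (at x within S)"
  by (rule has_derivative_vec_componentwise) (rule has_derivative_softmax_component)

lemma sum_power2_weighted_deviation_le:
  fixes p h :: "'k::finite \<Rightarrow> real"
  assumes p0: "\<And>i. 0 \<le> p i" and p1: "\<And>i. p i \<le> 1" and psum: "(\<Sum>i\<in>UNIV. p i) = 1"
  shows "(\<Sum>i\<in>UNIV. (p i * (h i - (\<Sum>l\<in>UNIV. p l * h l)))\<^sup>2) \<le> (\<Sum>i\<in>UNIV. (h i)\<^sup>2)"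
proof -
  define m where "m = (\<Sum>l\<in>UNIV. p l * h l)"
  have "(\<Sum>i\<in>UNIV. (p i * (h i - m))\<^sup>2) \<le> (\<Sum>i\<in>UNIV. p i * (h i - m)\<^sup>2)"
  proof (rule sum_mono)
    fix i
    have "(p i)\<^sup>2 \<le> p i" using p0[of i] p1[of i] by (simp add: power2_eq_square mult_left_le)
    then show "(p i * (h i - m))\<^sup>2 \<le> p i * (h i - m)\<^sup>2"
      by (simp add: power_mult_distrib mult_right_mono)
  qed
  also have "\<dots> = (\<Sum>i\<in>UNIV. p i * (h i)\<^sup>2) - 2 * m * (\<Sum>i\<in>UNIV. p i * h i)
      + m\<^sup>2 * (\<Sum>i\<in>UNIV. p i)"
    by (simp add: power2_diff algebra_simps sum.distrib sum_subtractf sum_distrib_left sum_distrib_right)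
  also have "\<dots> = (\<Sum>i\<in>UNIV. p i * (h i)\<^sup>2) - m\<^sup>2"
    by (simp add: psum m_def[symmetric] power2_eq_square)
  also have "\<dots> \<le> (\<Sum>i\<in>UNIV. (h i)\<^sup>2)"
  proof -
    have "(\<Sum>i\<in>UNIV. p i * (h i)\<^sup>2) \<le> (\<Sum>i\<in>UNIV. (h i)\<^sup>2)"
      by (intro sum_mono mult_left_le_one_le) (simp_all add: p0 p1)
    then show ?thesis using zero_le_power2[of m] by linarith
  qed
  finally show ?thesis unfolding m_def .
qed

lemma norm_softmax_deriv_le: "norm (softmax_deriv x h) \<le> norm h"
proof -
  have "(norm (softmax_deriv x h))\<^sup>2 \<le> (norm h)\<^sup>2"
    unfolding norm_vec_power2 softmax_deriv_def vec_lambda_beta real_norm_def power2_abs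
    by (rule sum_power2_weighted_deviation_le) (simp_all add: softmax_nonneg softmax_le_1 sum_softmax)
  then show ?thesis by simp
qed

lemma softmax_lipschitz: "norm (softmax x - softmax y) \<le> norm (x - y)"
  using differentiable_bound[of UNIV softmax softmax_deriv 1 x y]
  by (simp add: has_derivative_softmax onorm_le norm_softmax_deriv_le)

lemma norm_softmax_le_1: "norm (softmax x) \<le> 1"
proof -
  have "(norm (softmax x))\<^sup>2 \<le> (\<Sum>i\<in>UNIV. softmax x $ i)"
    unfolding norm_vec_power2
    by (intro sum_mono) (simp add: power2_eq_square mult_left_le_one_le softmax_nonneg softmax_le_1)
  then show ?thesis by (simp add: sum_softmax power_le_one_iff)
qed

lemma column_softmax_cols: "column j (softmax_cols B) = softmax (column j B)"
  by (simp add: column_def softmax_cols_def softmax_def vec_eq_iff)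

lemma norm_softmax_cols_diff_le: "norm (softmax_cols B - softmax_cols B') \<le> norm (B - B')"
  by (rule norm_matrix_le_if_columns_le)
     (simp add: column_diff column_softmax_cols softmax_lipschitz)

lemma norm_softmax_cols_le: "norm (softmax_cols (B::real^'k^'k)) \<le> sqrt (real CARD('k))"
  by (rule norm_matrix_le_sqrt_card) (simp add: column_softmax_cols norm_softmax_le_1)

lemma norm_matrix_mult_diff_le:
  "norm ((U::real^'n^'m) ** S - U' ** (S'::real^'k^'n))
    \<le> norm (U - U') * norm S + norm U' * norm (S - S')"
proof -
  have "U ** S - U' ** S' = (U - U') ** S + U' ** (S - S')"
    by (simp add: matrix_mult_diff_ldistrib matrix_mult_diff_rdistrib)
  then show ?thesis
    by (metis add_mono norm_matrix_mult_le norm_triangle_le)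
qed

lemma norm_quadratic_form_diff_le:
  fixes A :: "real^'n^'n" and U U' :: "real^'k^'n"
  shows "norm (transpose U ** A ** U - transpose U' ** A ** U')
    \<le> op_norm A * (norm U + norm U') * norm (U - U')"
proof -
  have "transpose U ** A ** U - transpose U' ** A ** U'
      = transpose (U - U') ** (A ** U) + transpose U' ** (A ** (U - U'))"
    by (simp add: transpose_diff matrix_mult_diff_ldistrib matrix_mult_diff_rdistrib matrix_mul_assoc)
  also have "norm \<dots> \<le> norm (transpose (U - U')) * norm (A ** U)
      + norm (transpose U') * norm (A ** (U - U'))"
    by (intro norm_triangle_le add_mono norm_matrix_mult_le)
  also have "\<dots> \<le> norm (U - U') * (op_norm A * norm U) + norm U' * (op_norm A * norm (U - U'))"
    unfolding norm_transpose
    by (intro add_mono mult_left_mono norm_matrix_mult_le_op_norm norm_ge_zero)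
  finally show ?thesis by (simp add: algebra_simps)
qed

lemma norm_attn_F_diff_le:
  fixes A :: "real^'r^'r" and V :: "real^'r^'q" and U U' :: "real^'k^'r"
  assumes "\<And>j. norm (column j U) \<le> 1" and "\<And>j. norm (column j U') \<le> 1"
  shows "norm (attn_F A V U - attn_F A V U')
    \<le> op_norm V * (sqrt (real CARD('k)) + 2 * real CARD('k) * op_norm A / sqrt (real CARD('r)))
        * norm (U - U')"
proof -
  define c where "c = 1 / sqrt (real CARD('r))"
  define X where "X = transpose U ** A ** U"
  define X' where "X' = transpose U' ** A ** U'"
  define S where "S = softmax_cols (c *\<^sub>R X)"
  define S' where "S' = softmax_cols (c *\<^sub>R X')"
  let ?K = "sqrt (real CARD('k))"
  have U: "norm U \<le> ?K" and U': "norm U' \<le> ?K"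
    using assms by (simp_all add: norm_matrix_le_sqrt_card)
  have "norm (S - S') \<le> norm (c *\<^sub>R X - c *\<^sub>R X')"
    unfolding S_def S'_def by (rule norm_softmax_cols_diff_le)
  also have "\<dots> = c * norm (X - X')"
    by (simp add: c_def flip: scaleR_diff_right)
  also have "\<dots> \<le> c * (op_norm A * (2 * ?K) * norm (U - U'))"
    unfolding X_def X'_def using U U' op_norm_nonneg[of A]
    by (intro mult_left_mono order_trans[OF norm_quadratic_form_diff_le] mult_right_mono)
       (simp_all add: c_def)
  finally have SS': "norm (S - S') \<le> c * (op_norm A * (2 * ?K) * norm (U - U'))" .
  have "norm (attn_F A V U - attn_F A V U') \<le> norm (V ** (U ** S - U' ** S'))"
    using norm_clip_cols_diff_le
    by (simp add: attn_F_def S_def S'_def X_def X'_def c_def matrix_mul_assoc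
        matrix_mult_diff_ldistrib)
  also have "\<dots> \<le> op_norm V * (norm (U - U') * norm S + norm U' * norm (S - S'))"
    by (intro order_trans[OF norm_matrix_mult_le_op_norm] mult_left_mono norm_matrix_mult_diff_le
        op_norm_nonneg)
  also have "\<dots> \<le> op_norm V * (norm (U - U') * ?K + ?K * (c * (op_norm A * (2 * ?K) * norm (U - U'))))"
    using U' SS' norm_softmax_cols_le[of "c *\<^sub>R X"]
    by (intro mult_left_mono add_mono mult_mono) (simp_all add: S_def op_norm_nonneg)
  also have "\<dots> = op_norm V * (?K + 2 * real CARD('k) * op_norm A / sqrt (real CARD('r))) * norm (U - U')"
    by (simp add: c_def algebra_simps)
  finally show ?thesis .
qed

theorem mainTheorem13:
  fixes A :: "real^'r^'r" and V :: "real^'r^'q" and U U' :: "real^'k^'r"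
  assumes "\<And>j. norm (column j U) \<le> 1"
    and "\<And>j. norm (column j U') \<le> 1"
  shows "(fro_norm (attn_F A V U - attn_F A V U'))^2
    \<le> 2 * real CARD('k) * (op_norm V)^2
        * (1 + 4 * real CARD('k) * (op_norm A)^2 / real CARD('r))
        * (fro_norm (U - U'))^2"
proof -
  define a where "a = sqrt (real CARD('k))"
  define b where "b = 2 * real CARD('k) * op_norm A / sqrt (real CARD('r))"
  define u where "u = norm (U - U')"
  have "fro_norm (attn_F A V U - attn_F A V U') \<le> op_norm V * (a + b) * u"
    using norm_attn_F_diff_le[OF assms] by (simp add: fro_norm_eq_norm a_def b_def u_def)
  then have "(fro_norm (attn_F A V U - attn_F A V U'))^2 \<le> (op_norm V)^2 * (a + b)^2 * u^2"
    by (metis fro_norm_eq_norm norm_ge_zero power_mono power_mult_distrib)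
  also have "\<dots> \<le> (op_norm V)^2 * (2 * a^2 + 2 * b^2) * u^2"
    using sum_squares_bound[of a b]
    by (intro mult_right_mono mult_left_mono) (simp_all add: power2_sum)
  also have "\<dots> = 2 * real CARD('k) * (op_norm V)^2
      * (1 + 4 * real CARD('k) * (op_norm A)^2 / real CARD('r)) * (fro_norm (U - U'))^2"
    by (simp add: a_def b_def u_def fro_norm_eq_norm power_divide
        power2_eq_square algebra_simps)
  finally show ?thesis .
qed

end
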